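(* Let $n\ge1$ be an integer and $m=\lfloor n/2\rfloor+1$. Then $$\gcd_{1\le r\le m}\binom{n-m+r}{r}=1.$$ *)

theory Defs
  imports Main
begin

end

theory Submission
  imports Defs
begin

text \<open>Pascal's rule writes \<open>(k + r) choose r\<close> as \<open>(k + 1 + r) choose r\<close> minus
  \<open>(k + r) choose (r - 1)\<close>. So a common divisor of the binomials \<open>(k + r) choose r\<close>,
  \<open>1 \<le> r \<le> m\<close>, also divides those with \<open>k\<close> lowered by one, at the price of losing
  the smallest \<open>r\<close>. After \<open>k\<close> such steps it divides \<open>m choose m = 1\<close>, provided \<open>k < m\<close>.\<close>

lemma dvd_choose_lower_top:
  fixes d j a m :: nat
  assumes "1 \<le> a" and "\<forall>r\<in>{a..m}. d dvd (Suc j + r) choose r"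
  shows "\<forall>r\<in>{Suc a..m}. d dvd (j + r) choose r"
proof
  fix r assume r: "r \<in> {Suc a..m}"
  then obtain s where s: "r = Suc s" and "s \<in> {a..m}"
    using assms(1) by (cases r) auto
  have pascal: "(Suc j + r) choose r = ((Suc j + s) choose s) + ((j + r) choose r)"
    using s by simp
  have "d dvd (Suc j + r) choose r" "d dvd (Suc j + s) choose s"
    using assms(2) r \<open>s \<in> {a..m}\<close> by auto
  then show "d dvd (j + r) choose r"
    unfolding pascal by (simp add: dvd_add_right_iff)
qed

lemma dvd_choose_lower_top_iter:
  fixes d i j m :: nat
  assumes "\<forall>r\<in>{1..m}. d dvd (i + j + r) choose r"
  shows "\<forall>r\<in>{Suc i..m}. d dvd (j + r) choose r"
  using assms
proof (induction i arbitrary: j)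
  case 0
  then show ?case by simp
next
  case (Suc i)
  have "\<forall>r\<in>{Suc i..m}. d dvd (Suc j + r) choose r"
    using Suc.IH[of "Suc j"] Suc.prems by simp
  then show ?case
    by (rule dvd_choose_lower_top[rotated]) simp
qed

lemma Gcd_choose_eq_1:
  fixes k m :: nat
  assumes "k < m"
  shows "Gcd ((\<lambda>r. (k + r) choose r) ` {1..m}) = 1"
proof -
  define d where "d = Gcd ((\<lambda>r. (k + r) choose r) ` {1..m})"
  have "\<forall>r\<in>{1..m}. d dvd (k + 0 + r) choose r"
    unfolding d_def by (auto intro: Gcd_dvd)
  then have "d dvd (0 + m) choose m"
    using dvd_choose_lower_top_iter assms by fastforce
  then show ?thesis
    unfolding d_def by simp
qed

theorem lemma6:
  fixes n m :: nat
  assumes "n \<ge> 1" and "m = n div 2 + 1"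
  shows "Gcd ((\<lambda>r. (n - m + r) choose r) ` {1..m}) = 1"
  using Gcd_choose_eq_1 assms(2) by simp

end
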